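(* Let $K$ be a field of prime characteristic $p$, $C$ a cyclic $p$-group of order $q>1$, $\tilde C$ its subgroup of index $p$, and $A\in R_{KC}$ with $A\in\mathbb{Z}\{V_p,V_{2p},\dots,V_q\}$. (i) If $A\!\downarrow_{\tilde C}=0$ then $A=0$. (ii) If $A\!\downarrow_{\tilde C}\in\mathbb{Z}\tilde V_{q/p}$ then $A\in\mathbb{Z}V_q$.
   Context: The indecomposable $KC$-modules up to isomorphism are $V_1,\dots,V_q$ with $\dim V_r=r$, and those of $K\tilde C$ are $\tilde V_1,\dots,\tilde V_{q/p}$ with $\dim\tilde V_s=s$. $R_{KC}$ and $R_{K\tilde C}$ are the Green rings (bases these indecomposables, addition from direct sum, multiplication from tensor product). $A\mapsto A\!\downarrow_{\tilde C}$ is the ring homomorphism $R_{KC}\to R_{K\tilde C}$ induced by restriction of modules. *)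

theory Defs
  imports "Jordan_Normal_Form.Jordan_Normal_Form_Uniqueness"
begin

text \<open>C = <g> is cyclic of order q = p^n over a field K (type 'a) of
characteristic p. The indecomposable KC-module V_r (1 <= r <= q) is K^r with g acting
by the unipotent Jordan block J_r(1). The subgroup of index p is generated by g^p,
and the indecomposable modules of that subgroup are the Jordan blocks J_s(1),
1 <= s <= q/p.  The restriction of V_r is K^r with g^p acting by J_r(1)^p; by
Krull-Schmidt it decomposes into a direct sum of Jordan blocks, i.e. its Jordan
normal form.  restr_mult K p r s is the multiplicity of the indecomposable of
dimension s (block (s,1)) in the restriction of V_r.\<close>

definition V_action :: "'a itself \<Rightarrow> nat \<Rightarrow> 'a::field mat" where
  "V_action K r = jordan_block r (1::'a)"

definition restr_mult :: "'a::field itself \<Rightarrow> nat \<Rightarrow> nat \<Rightarrow> nat \<Rightarrow> nat" where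
  "restr_mult K p r s =
     count (mset (SOME n_as. jordan_nf ((V_action K r) ^\<^sub>m p) n_as)) (s, 1::'a)"

text \<open>An element A of the Green ring R_KC is encoded by its integer coefficients
a r on the basis V_1, ..., V_q (a r = 0 outside {1..q}).\<close>

definition restr :: "'a::field itself \<Rightarrow> nat \<Rightarrow> nat \<Rightarrow> (nat \<Rightarrow> int) \<Rightarrow> nat \<Rightarrow> int" where
  "restr K p q a s = (\<Sum>r\<in>{1..q}. a r * int (restr_mult K p r s))"

end

theory Submission
  imports Defs "Jordan_Normal_Form.Jordan_Normal_Form_Existence"
begin

text \<open>In characteristic \<open>p\<close> we have \<open>(a I + N)\<^sup>p = a\<^sup>p I + N\<^sup>p\<close> for the nilpotent shift
  \<open>N\<close>, so the generalised eigenspaces of \<open>J\<^sub>n(a)\<^sup>p\<close> are the kernels of the powers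
  \<open>N\<^sup>p\<^sup>k\<close>, of dimensions \<open>min (p k) n\<close>. For \<open>n = p m\<close> these are \<open>p\<close> times those of a
  single block of size \<open>m\<close>, so \<open>V\<^sub>p\<^sub>m\<close> restricts to \<open>p\<close> copies of the \<open>m\<close>-dimensional
  indecomposable of the subgroup. Thus restriction sends \<open>\<Sum> a\<^sub>p\<^sub>m V\<^sub>p\<^sub>m\<close> to the element with
  coefficient \<open>p a\<^sub>p\<^sub>m\<close> in dimension \<open>m\<close>, which determines every coefficient.\<close>

lemma pow_mat_mult:
  assumes A: "(A :: 'a :: semiring_1 mat) \<in> carrier_mat n n"
  shows "(A ^\<^sub>m k) ^\<^sub>m l = A ^\<^sub>m (k * l)"
proof -
  let ?R = "ring_mat TYPE('a) n ()"
  interpret semiring ?R by (rule semiring_mat)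
  have carrier: "carrier ?R = carrier_mat n n" by (simp add: ring_mat_def)
  have "(A ^\<^sub>m k) ^\<^sub>m l = (A ^\<^sub>m k) [^]\<^bsub>?R\<^esub> l"
    using A by (intro pow_mat_ring_pow) simp
  also have "\<dots> = (A [^]\<^bsub>?R\<^esub> k) [^]\<^bsub>?R\<^esub> l"
    by (simp only: pow_mat_ring_pow[OF A, where b = "()"])
  also have "\<dots> = A [^]\<^bsub>?R\<^esub> (k * l)"
    using A by (intro nat_pow_pow) (simp add: carrier)
  finally show ?thesis
    using pow_mat_ring_pow[OF A, where k = "k * l" and b = "()"] by simp
qed

lemma char_matrix_jordan_block_pow_char:
  assumes p: "prime p" and ch: "CHAR('a::field) = p"
  shows "char_matrix (jordan_block n (a::'a) ^\<^sub>m p) (a ^ p) = jordan_block n 0 ^\<^sub>m p"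
proof (rule eq_matI)
  fix i j assume "i < dim_row (jordan_block n (0::'a) ^\<^sub>m p)" "j < dim_col (jordan_block n (0::'a) ^\<^sub>m p)"
  then have ij: "i < n" "j < n" by (simp_all only: jordan_block_pow_dim)
  have p0: "p > 0" using p by (simp add: prime_gt_0_nat)
  have choose_zero: "of_nat (p choose d) = (0::'a)" if "d \<noteq> 0" "d \<noteq> p" for d
  proof (cases "d < p")
    case True
    with that p have "p dvd p choose d" by (intro dvd_choose_prime) auto
    with ch show ?thesis by (simp add: of_nat_eq_0_iff_char_dvd)
  qed (use that in \<open>simp add: binomial_eq_0\<close>)
  show "char_matrix (jordan_block n a ^\<^sub>m p) (a ^ p) $$ (i, j) = (jordan_block n 0 ^\<^sub>m p) $$ (i, j)"
    using ij p0 choose_zero[of "j - i"]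
    by (cases "i \<le> j \<and> j - i = p") (auto simp: char_matrix_def jordan_block_pow jordan_block_zero_pow)
qed (simp_all add: char_matrix_def)

lemma dim_gen_eigenspace_jordan_block_pow_char:
  assumes "prime p" and "CHAR('a::field) = p"
  shows "dim_gen_eigenspace (jordan_block n (a::'a) ^\<^sub>m p) (a ^ p) k = min (p * k) n"
proof -
  have "dim_gen_eigenspace (jordan_block n a ^\<^sub>m p) (a ^ p) k
      = kernel_dim (jordan_block n (0::'a) ^\<^sub>m (p * k))"
    unfolding dim_gen_eigenspace_def char_matrix_jordan_block_pow_char[OF assms]
    by (simp add: pow_mat_mult[OF jordan_block_carrier])
  also have "\<dots> = min (p * k) n"
    by (simp only: kernel_dim_def jordan_block_pow_dim dim_kernel_zero_jordan_block_pow)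
  finally show ?thesis .
qed

lemma jordan_nf_exists_jordan_block_pow:
  "\<exists>n_as. jordan_nf (jordan_block n (a::'a::field) ^\<^sub>m k) n_as"
proof
  show "jordan_nf (jordan_block n a ^\<^sub>m k) (triangular_to_jnf_vector (jordan_block n a ^\<^sub>m k))"
    by (rule triangular_to_jnf_vector[of _ n]) (auto simp: upper_triangular_def jordan_block_pow)
qed

lemma count_jordan_nf_jordan_block_pow_char:
  assumes p: "prime p" and ch: "CHAR('a::field) = p"
    and jnf: "jordan_nf (jordan_block (p * m) (a::'a) ^\<^sub>m p) n_as" and s: "s > 0"
  shows "count (mset n_as) (s, a ^ p) = (if s = m then p else 0)"
proof -
  note dim = dim_gen_eigenspace_jordan_block_pow_char[OF p ch]
  have "count (mset n_as) (s, a ^ p) = compute_nr_of_jordan_blocks (jordan_block (p * m) a ^\<^sub>m p) (a ^ p) s"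
    using compute_nr_of_jordan_blocks[OF jnf] s by (simp add: count_mset count_list_eq_length_filter)
  also have "\<dots> = p * (2 * min s m - min (s - 1) m - min (Suc s) m)"
    unfolding compute_nr_of_jordan_blocks_def dim nat_mult_min_right[symmetric]
    by (metis diff_mult_distrib2 mult.left_commute Suc_eq_plus1)
  also have "\<dots> = (if s = m then p else 0)"
    using s by (cases s m rule: linorder_cases) auto
  finally show ?thesis .
qed

lemma restr_mult_multiple_of_p:
  assumes "prime p" and "CHAR('a::field) = p" and "s > 0"
  shows "restr_mult (K :: 'a itself) p (p * m) s = (if s = m then p else 0)"
proof -
  have "jordan_nf (V_action K (p * m) ^\<^sub>m p) (SOME n_as. jordan_nf (V_action K (p * m) ^\<^sub>m p) n_as)"
    unfolding V_action_def by (rule someI_ex, rule jordan_nf_exists_jordan_block_pow)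
  from count_jordan_nf_jordan_block_pow_char[OF assms(1,2) this[unfolded V_action_def] assms(3)]
  show ?thesis unfolding restr_mult_def V_action_def by simp
qed

lemma restr_eq_p_times_coeff:
  assumes p: "prime p" and ch: "CHAR('a::field) = p" and "p dvd q"
    and dvd: "\<forall>r. a r \<noteq> 0 \<longrightarrow> p dvd r" and s: "s \<in> {1..q div p}"
  shows "restr (K :: 'a itself) p q a s = int p * a (p * s)"
proof -
  have p0: "p > 0" using p by (simp add: prime_gt_0_nat)
  have summand: "a r * int (restr_mult K p r s) = (if r = p * s then int p * a r else 0)" for r
  proof (cases "a r = 0")
    case False
    with dvd obtain m where "r = p * m" by blast
    with p0 s show ?thesis by (simp add: restr_mult_multiple_of_p[OF p ch])
  qed auto
  have "p * s \<in> {1..q}"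
    using s p0 \<open>p dvd q\<close> by (auto elim!: dvdE)
  then show ?thesis unfolding restr_def summand by simp
qed

lemma restr_nonzero_at_coeff:
  assumes p: "prime p" and "CHAR('a::field) = p" and "p dvd q"
    and supp: "\<forall>r. r \<notin> {1..q} \<longrightarrow> a r = 0" and dvd: "\<forall>r. a r \<noteq> 0 \<longrightarrow> p dvd r"
    and ar: "a r \<noteq> 0"
  shows "r div p \<in> {1..q div p}" and "restr (K :: 'a itself) p q a (r div p) \<noteq> 0"
proof -
  have p0: "p > 0" using p by (simp add: prime_gt_0_nat)
  obtain m where r: "r = p * m" using dvd ar by blast
  have "r \<in> {1..q}" using supp ar by blast
  then show index: "r div p \<in> {1..q div p}"
    using p0 \<open>p dvd q\<close> unfolding r by (auto elim!: dvdE)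
  show "restr K p q a (r div p) \<noteq> 0"
    using restr_eq_p_times_coeff[OF assms(1-3,5) index] ar p0 r by simp
qed

theorem lemma4p1:
  fixes K :: "'a::field itself" and p q n :: nat and a :: "nat \<Rightarrow> int"
  assumes "prime p" and "CHAR('a) = p"
    and "n \<ge> 1" and "q = p ^ n"
    and "\<forall>r. r \<notin> {1..q} \<longrightarrow> a r = 0"
    and "\<forall>r. a r \<noteq> 0 \<longrightarrow> p dvd r"
  shows "((\<forall>s\<in>{1..q div p}. restr K p q a s = 0) \<longrightarrow> (\<forall>r. a r = 0))
       \<and> ((\<forall>s\<in>{1..q div p}. s \<noteq> q div p \<longrightarrow> restr K p q a s = 0)
            \<longrightarrow> (\<forall>r. r \<noteq> q \<longrightarrow> a r = 0))"
proof -
  have "p dvd q" using assms(3,4) by (simp add: dvd_power)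
  note nonzero = restr_nonzero_at_coeff[OF assms(1,2) this assms(5,6)]
  have "r div p \<noteq> q div p" if "r \<noteq> q" "a r \<noteq> 0" for r
    using that assms(6) \<open>p dvd q\<close> by (auto elim!: dvdE simp: prime_gt_0_nat[OF assms(1)])
  then show ?thesis using nonzero by blast
qed

end
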